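(* Let $\mathbf{\hat X}=(\hat x_{f,h})\in[0,1]^{F\times H}$. Let $\alpha$ be a set of edges of the complete bipartite graph between $\{1,\dots,F\}$ and $\{1,\dots,H\}$ forming a simple cycle or a simple path, with $\alpha=M_1\cup M_2$ a decomposition into two disjoint matchings (alternate edges). Let $\epsilon_1=\min\{\min_{(f,h)\in M_1}\hat x_{f,h},\ \min_{(f,h)\in M_2}(1-\hat x_{f,h})\}$, $\epsilon_2=\min\{\min_{(f,h)\in M_2}\hat x_{f,h},\ \min_{(f,h)\in M_1}(1-\hat x_{f,h})\}$, and for $\epsilon\in[-\epsilon_1,\epsilon_2]$ define $\mathbf{X}(\epsilon,\alpha)$ by $x_{f,h}(\epsilon,\alpha)=\hat x_{f,h}+\epsilon$ for $(f,h)\in M_1$, $x_{f,h}(\epsilon,\alpha)=\hat x_{f,h}-\epsilon$ for $(f,h)\in M_2$, and $x_{f,h}(\epsilon,\alpha)=\hat x_{f,h}$ otherwise. Then the function $\epsilon\mapsto g(\mathbf{X}(\epsilon,\alpha))$ is convex on $[-\epsilon_1,\epsilon_2]$, where $$g(\mathbf{X})=\sum_{f=1}^F\sum_{u=1}^U P_f\,\widetilde{\omega}_u\Big[1-\prod_{h\in\mathcal{H}(u),\,h\neq0}(1-x_{f,h})\Big].$$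
   Context: Setting: helpers $\{0,1,\dots,H\}$ (helper $0$ is the base station), users $\{1,\dots,U\}$, files $\{1,\dots,F\}$ with probabilities $P_f\ge0$; $\mathcal{H}(u)$ is the set of helpers connected to user $u$ (always containing $0$); $\widetilde{\omega}_u\ge 0$ are given weights (in the paper $\widetilde{\omega}_u=\omega_{0,u}-\omega_1$, where all helper-user links have per-bit delay $\omega_1$ and the base station link to $u$ has delay $\omega_{0,u}>\omega_1$). A matching is a set of edges no two of which share a vertex. The pairs $(\mathbf{\hat X},\alpha)$ considered are exactly those arising as intermediate values in the pipage rounding procedure (where $\alpha$ is a simple cycle or a simple path between degree-one nodes in the subgraph of edges with fractional $\hat x_{f,h}$). *)

theory Defs
  imports "HOL-Analysis.Analysis"
begin

text \<open>Vertices of the complete bipartite graph between files {1..F} (Inl f)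
and helpers {1..H} (Inr h). An edge is represented as the pair (f,h).\<close>

fun bip_adj :: "nat + nat \<Rightarrow> nat + nat \<Rightarrow> bool" where
  "bip_adj (Inl f) (Inr h) = True"
| "bip_adj (Inr h) (Inl f) = True"
| "bip_adj _ _ = False"

fun bip_edge :: "nat + nat \<Rightarrow> nat + nat \<Rightarrow> nat \<times> nat" where
  "bip_edge (Inl f) (Inr h) = (f, h)"
| "bip_edge (Inr h) (Inl f) = (f, h)"
| "bip_edge _ _ = undefined"

fun valid_vertex :: "nat \<Rightarrow> nat \<Rightarrow> nat + nat \<Rightarrow> bool" where
  "valid_vertex F H (Inl f) = (f \<in> {1..F})"
| "valid_vertex F H (Inr h) = (h \<in> {1..H})"

definition path_edges :: "(nat + nat) list \<Rightarrow> (nat \<times> nat) list" where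
  "path_edges vs = map (\<lambda>i. bip_edge (vs ! i) (vs ! Suc i)) [0..<length vs - 1]"

definition cycle_edges :: "(nat + nat) list \<Rightarrow> (nat \<times> nat) list" where
  "cycle_edges vs = path_edges vs @ [bip_edge (last vs) (hd vs)]"

definition simple_path :: "nat \<Rightarrow> nat \<Rightarrow> (nat + nat) list \<Rightarrow> bool" where
  "simple_path F H vs \<longleftrightarrow> length vs \<ge> 2 \<and> distinct vs \<and> (\<forall>v\<in>set vs. valid_vertex F H v)
     \<and> (\<forall>i. Suc i < length vs \<longrightarrow> bip_adj (vs ! i) (vs ! Suc i))"

text \<open>Simple cycle: distinct vertex sequence of length at least 4 whose last vertex is
adjacent to the first (bipartiteness forces even length).\<close>
definition simple_cycle :: "nat \<Rightarrow> nat \<Rightarrow> (nat + nat) list \<Rightarrow> bool" where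
  "simple_cycle F H vs \<longleftrightarrow> simple_path F H vs \<and> length vs \<ge> 4 \<and> bip_adj (last vs) (hd vs)"

definition alt_cycle_or_path ::
  "nat \<Rightarrow> nat \<Rightarrow> (nat \<times> nat) set \<Rightarrow> (nat \<times> nat) set \<Rightarrow> (nat \<times> nat) set \<Rightarrow> bool" where
  "alt_cycle_or_path F H \<alpha> M1 M2 \<longleftrightarrow> (\<exists>vs es.
      ((simple_path F H vs \<and> es = path_edges vs) \<or> (simple_cycle F H vs \<and> es = cycle_edges vs))
      \<and> \<alpha> = set es
      \<and> M1 = {es ! i | i. i < length es \<and> even i}
      \<and> M2 = {es ! i | i. i < length es \<and> odd i})"

definition eps1 :: "(nat \<Rightarrow> nat \<Rightarrow> real) \<Rightarrow> (nat \<times> nat) set \<Rightarrow> (nat \<times> nat) set \<Rightarrow> real" where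
  "eps1 xh M1 M2 = Min ((\<lambda>(f,h). xh f h) ` M1 \<union> (\<lambda>(f,h). 1 - xh f h) ` M2)"

definition eps2 :: "(nat \<Rightarrow> nat \<Rightarrow> real) \<Rightarrow> (nat \<times> nat) set \<Rightarrow> (nat \<times> nat) set \<Rightarrow> real" where
  "eps2 xh M1 M2 = Min ((\<lambda>(f,h). xh f h) ` M2 \<union> (\<lambda>(f,h). 1 - xh f h) ` M1)"

definition X_eps :: "(nat \<Rightarrow> nat \<Rightarrow> real) \<Rightarrow> (nat \<times> nat) set \<Rightarrow> (nat \<times> nat) set \<Rightarrow> real
    \<Rightarrow> nat \<Rightarrow> nat \<Rightarrow> real" where
  "X_eps xh M1 M2 \<epsilon> f h =
     (if (f,h) \<in> M1 then xh f h + \<epsilon> else if (f,h) \<in> M2 then xh f h - \<epsilon> else xh f h)"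

definition g_obj :: "nat \<Rightarrow> nat \<Rightarrow> (nat \<Rightarrow> real) \<Rightarrow> (nat \<Rightarrow> real) \<Rightarrow> (nat \<Rightarrow> nat set)
    \<Rightarrow> (nat \<Rightarrow> nat \<Rightarrow> real) \<Rightarrow> real" where
  "g_obj F U P w Hc X =
     (\<Sum>f=1..F. \<Sum>u=1..U. P f * w u * (1 - (\<Prod>h\<in>Hc u - {0}. (1 - X f h))))"

end

theory Submission
  imports Defs
begin

(* A file vertex occurs only once on the simple path or cycle, and the two
   edges at it have different parities, so M1 and M2 each contain at most one edge (f, h).
   Hence in the product over the helpers of a user only two factors depend on \<epsilon>, namely
   1 - x - \<epsilon> and 1 - x' + \<epsilon>, and 1 minus the product is a quadratic in \<epsilon> with
   nonnegative leading coefficient. The objective g is a nonnegative combination of such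
   quadratics, so it is convex on the whole real line. *)

lemma convex_on_sum_functions:
  fixes f :: "'i \<Rightarrow> 'a::real_vector \<Rightarrow> real"
  assumes "finite A" "convex S" "\<And>i. i \<in> A \<Longrightarrow> convex_on S (f i)"
  shows "convex_on S (\<lambda>x. \<Sum>i\<in>A. f i x)"
  using assms(1,3)
proof (induction A rule: finite_induct)
  case empty
  then show ?case using assms(2) by (simp add: convex_on_const)
next
  case (insert i A)
  then show ?case by (simp add: convex_on_add)
qed

lemma convex_on_quadratic:
  fixes a b c :: real
  assumes "0 \<le> c"
  shows "convex_on UNIV (\<lambda>x. a + b * x + c * x\<^sup>2)"
proof -
  have "convex_on UNIV (\<lambda>x::real. a + b * x)"
    by (simp add: convex_on_def algebra_simps flip: distrib_right)
  moreover have "convex_on UNIV (\<lambda>x::real. c * x\<^sup>2)"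
    using assms convex_power2 by (rule convex_on_cmul)
  ultimately show ?thesis by (rule convex_on_add)
qed

lemma convex_on_minus_affine_product:
  fixes c s t :: real
  assumes "0 \<le> c" "0 \<le> s" "0 \<le> t"
  shows "convex_on UNIV (\<lambda>x. k - c * (a - s * x) * (b + t * x))"
proof -
  have "(\<lambda>x. k - c * (a - s * x) * (b + t * x))
      = (\<lambda>x. (k - c * a * b) + (c * (s * b - a * t)) * x + (c * s * t) * x\<^sup>2)"
    by (simp add: fun_eq_iff algebra_simps power2_eq_square)
  then show ?thesis using assms by (simp add: convex_on_quadratic)
qed

lemma convex_on_one_minus_prod_X_eps:
  assumes M1_unique: "\<And>h h'. (f, h) \<in> M1 \<Longrightarrow> (f, h') \<in> M1 \<Longrightarrow> h = h'"
    and M2_unique: "\<And>h h'. (f, h) \<in> M2 \<Longrightarrow> (f, h') \<in> M2 \<Longrightarrow> h = h'"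
    and "finite S" and le1: "\<And>h. h \<in> S \<Longrightarrow> xh f h \<le> 1"
  shows "convex_on UNIV (\<lambda>e. 1 - (\<Prod>h\<in>S. 1 - X_eps xh M1 M2 e f h))"
proof -
  define T0 where "T0 = {h\<in>S. (f, h) \<notin> M1 \<and> (f, h) \<notin> M2}"
  define T1 where "T1 = {h\<in>S. (f, h) \<in> M1}"
  \<comment> \<open>X_eps gives M1 precedence over M2, hence the exclusion of M1 in T2\<close>
  define T2 where "T2 = {h\<in>S. (f, h) \<notin> M1 \<and> (f, h) \<in> M2}"
  have S_split: "S = T0 \<union> (T1 \<union> T2)" and fin: "finite T0" "finite T1" "finite T2"
    using \<open>finite S\<close> by (auto simp: T0_def T1_def T2_def)
  define c where "c = (\<Prod>h\<in>T0. 1 - xh f h)"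
  have "0 \<le> c"
    unfolding c_def by (rule prod_nonneg) (use le1 in \<open>auto simp: T0_def\<close>)
  have T0_const: "(\<Prod>h\<in>T0. 1 - X_eps xh M1 M2 e f h) = c" for e
    unfolding c_def by (rule prod.cong) (auto simp: T0_def X_eps_def)
  obtain a s where "0 \<le> s" and T1_affine: "\<And>e. (\<Prod>h\<in>T1. 1 - X_eps xh M1 M2 e f h) = a - s * e"
  proof (cases "T1 = {}")
    case False
    then obtain h where h: "h \<in> T1" by auto
    then have "T1 = {h}" "(f, h) \<in> M1" using M1_unique by (auto simp: T1_def)
    then show ?thesis by (intro that[of 1 "1 - xh f h"]) (simp_all add: X_eps_def)
  qed (use that[of 0 1] in simp)
  obtain b t where "0 \<le> t" and T2_affine: "\<And>e. (\<Prod>h\<in>T2. 1 - X_eps xh M1 M2 e f h) = b + t * e"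
  proof (cases "T2 = {}")
    case False
    then obtain h where h: "h \<in> T2" by auto
    then have "T2 = {h}" "(f, h) \<notin> M1" "(f, h) \<in> M2" using M2_unique by (auto simp: T2_def)
    then show ?thesis by (intro that[of 1 "1 - xh f h"]) (simp_all add: X_eps_def)
  qed (use that[of 0 1] in simp)
  have "(\<Prod>h\<in>S. 1 - X_eps xh M1 M2 e f h) = c * (a - s * e) * (b + t * e)" for e
  proof -
    have "(\<Prod>h\<in>S. 1 - X_eps xh M1 M2 e f h) = (\<Prod>h\<in>T0. 1 - X_eps xh M1 M2 e f h)
        * ((\<Prod>h\<in>T1. 1 - X_eps xh M1 M2 e f h) * (\<Prod>h\<in>T2. 1 - X_eps xh M1 M2 e f h))"
      unfolding S_split using fin
      by (subst prod.union_disjoint; (subst prod.union_disjoint)?) (auto simp: T0_def T1_def T2_def)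
    then show ?thesis by (simp add: T0_const T1_affine T2_affine)
  qed
  then show ?thesis
    using convex_on_minus_affine_product[OF \<open>0 \<le> c\<close> \<open>0 \<le> s\<close> \<open>0 \<le> t\<close>] by simp
qed

(* Successor indices are taken modulo the length, so that path and cycle edges alike are
   the first L walk edges. *)
definition walk_edge :: "(nat + nat) list \<Rightarrow> nat \<Rightarrow> nat \<times> nat" where
  "walk_edge vs i = bip_edge (vs ! i) (vs ! (Suc i mod length vs))"

lemma path_edges_walk_edge: "path_edges vs = map (walk_edge vs) [0..<length vs - 1]"
  unfolding path_edges_def walk_edge_def by (rule map_cong) simp_all

lemma cycle_edges_walk_edge:
  assumes "vs \<noteq> []"
  shows "cycle_edges vs = map (walk_edge vs) [0..<length vs]"
proof -
  have "[0..<length vs] = [0..<length vs - 1] @ [length vs - 1]"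
    using assms by (cases "length vs") auto
  moreover have "walk_edge vs (length vs - 1) = bip_edge (last vs) (hd vs)"
    using assms unfolding walk_edge_def by (simp add: last_conv_nth hd_conv_nth)
  ultimately show ?thesis
    unfolding cycle_edges_def path_edges_walk_edge by simp
qed

lemma bip_adj_isl: "bip_adj a b \<Longrightarrow> isl a \<noteq> isl b"
  by (cases a; cases b) auto

lemma fst_bip_edge: "bip_adj a b \<Longrightarrow> fst (bip_edge a b) = (if isl a then projl a else projl b)"
  by (cases a; cases b) auto

lemma nth_map_upt_Collect_eq_image:
  "{map g [0..<L] ! i | i. i < length (map g [0..<L]) \<and> P i} = g ` {i. i < L \<and> P i}"
  by force

lemma alt_cycle_or_path_walk:
  assumes "alt_cycle_or_path F H \<alpha> M1 M2"
  obtains vs L where "distinct vs" "L \<le> length vs"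
    "\<And>i. i < L \<Longrightarrow> bip_adj (vs ! i) (vs ! (Suc i mod length vs))"
    "M1 = walk_edge vs ` {i. i < L \<and> even i}" "M2 = walk_edge vs ` {i. i < L \<and> odd i}"
proof -
  obtain vs es where vs: "(simple_path F H vs \<and> es = path_edges vs) \<or> (simple_cycle F H vs \<and> es = cycle_edges vs)"
    and M1: "M1 = {es ! i | i. i < length es \<and> even i}"
    and M2: "M2 = {es ! i | i. i < length es \<and> odd i}"
    using assms unfolding alt_cycle_or_path_def by blast
  then have path: "simple_path F H vs" by (auto simp: simple_cycle_def)
  then have "distinct vs" "vs \<noteq> []"
    and adj: "\<And>i. Suc i < length vs \<Longrightarrow> bip_adj (vs ! i) (vs ! Suc i)"
    by (auto simp: simple_path_def)
  obtain L where L: "L \<le> length vs" "es = map (walk_edge vs) [0..<L]"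
    and adj_L: "\<And>i. i < L \<Longrightarrow> bip_adj (vs ! i) (vs ! (Suc i mod length vs))"
  proof (cases "simple_path F H vs \<and> es = path_edges vs")
    case True
    then show ?thesis
      using adj by (intro that[of "length vs - 1"]) (simp_all add: path_edges_walk_edge)
  next
    case False
    with vs have es: "es = cycle_edges vs" and closing: "bip_adj (last vs) (hd vs)"
      by (auto simp: simple_cycle_def)
    have "bip_adj (vs ! i) (vs ! (Suc i mod length vs))" if "i < length vs" for i
    proof (cases "Suc i = length vs")
      case True
      then have "vs ! i = last vs" "vs ! (Suc i mod length vs) = hd vs"
        using \<open>vs \<noteq> []\<close> by (simp_all add: last_conv_nth hd_conv_nth flip: True)
      with closing show ?thesis by simp
    qed (use adj that in simp)
    then show ?thesis
      using \<open>vs \<noteq> []\<close> by (intro that[of "length vs"]) (simp_all add: es cycle_edges_walk_edge)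
  qed
  show ?thesis
    by (rule that[OF \<open>distinct vs\<close> L(1) adj_L]) (simp_all only: M1 M2 L(2) nth_map_upt_Collect_eq_image)
qed

lemma walk_isl_alternates:
  assumes "L \<le> length vs" "\<And>i. i < L \<Longrightarrow> bip_adj (vs ! i) (vs ! (Suc i mod length vs))"
    and "k < L"
  shows "isl (vs ! k) \<longleftrightarrow> (isl (vs ! 0) \<longleftrightarrow> even k)"
  using \<open>k < L\<close>
proof (induction k)
  case (Suc k)
  then have "bip_adj (vs ! k) (vs ! Suc k)"
    using assms(1) assms(2)[of k] by simp
  with Suc show ?case by (auto dest: bip_adj_isl)
qed simp

lemma walk_edge_same_parity_inj:
  assumes "distinct vs" "L \<le> length vs"
    and adj: "\<And>i. i < L \<Longrightarrow> bip_adj (vs ! i) (vs ! (Suc i mod length vs))"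
    and "i < L" "j < L" "even i \<longleftrightarrow> even j"
    and "fst (walk_edge vs i) = fst (walk_edge vs j)"
  shows "i = j"
proof -
  have same_side: "isl (vs ! i) \<longleftrightarrow> isl (vs ! j)"
    using walk_isl_alternates[OF assms(2) adj] assms(4-6) by blast
  have "i < length vs" "j < length vs" "0 < length vs" using assms(2,4,5) by linarith+
  have nth_inj: "a = b" if "vs ! a = vs ! b" "a < length vs" "b < length vs" for a b
    using that \<open>distinct vs\<close> nth_eq_iff_index_eq by blast
  show ?thesis
  proof (cases "isl (vs ! i)")
    case True
    then have "vs ! i = vs ! j"
      using same_side assms(7) fst_bip_edge[OF adj] \<open>i < L\<close> \<open>j < L\<close>
      by (simp add: walk_edge_def) (metis sum.collapse(1))
    then show ?thesis using nth_inj \<open>i < length vs\<close> \<open>j < length vs\<close> by blast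
  next
    case False
    have "isl (vs ! (Suc i mod length vs))" "isl (vs ! (Suc j mod length vs))"
      using False same_side bip_adj_isl[OF adj] \<open>i < L\<close> \<open>j < L\<close> by blast+
    then have "vs ! (Suc i mod length vs) = vs ! (Suc j mod length vs)"
      using False same_side assms(7) fst_bip_edge[OF adj] \<open>i < L\<close> \<open>j < L\<close>
      by (simp add: walk_edge_def) (metis sum.collapse(1))
    then have "Suc i mod length vs = Suc j mod length vs"
      by (rule nth_inj) (rule mod_less_divisor, fact)+
    then show ?thesis
      using \<open>i < length vs\<close> \<open>j < length vs\<close> by (simp add: mod_Suc split: if_splits)
  qed
qed

lemma alt_cycle_or_path_file_unique:
  assumes "alt_cycle_or_path F H \<alpha> M1 M2"
  shows "(f, h) \<in> M1 \<Longrightarrow> (f, h') \<in> M1 \<Longrightarrow> h = h'"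
    and "(f, h) \<in> M2 \<Longrightarrow> (f, h') \<in> M2 \<Longrightarrow> h = h'"
proof -
  obtain vs L where walk: "distinct vs" "L \<le> length vs"
      "\<And>i. i < L \<Longrightarrow> bip_adj (vs ! i) (vs ! (Suc i mod length vs))"
    and M1: "M1 = walk_edge vs ` {i. i < L \<and> even i}"
    and M2: "M2 = walk_edge vs ` {i. i < L \<and> odd i}"
    using alt_cycle_or_path_walk[OF assms] by blast
  have same_file: "h = h'"
    if "i < L" "j < L" "even i \<longleftrightarrow> even j" "walk_edge vs i = (f, h)" "walk_edge vs j = (f, h')"
    for i j
  proof -
    have "i = j" by (rule walk_edge_same_parity_inj[OF walk]) (simp_all add: that)
    with that show ?thesis by simp
  qed
  show "(f, h) \<in> M1 \<Longrightarrow> (f, h') \<in> M1 \<Longrightarrow> h = h'"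
    unfolding M1 by (auto intro: same_file)
  show "(f, h) \<in> M2 \<Longrightarrow> (f, h') \<in> M2 \<Longrightarrow> h = h'"
    unfolding M2 by (auto intro: same_file)
qed

theorem mainTheorem5:
  fixes F H U :: nat
    and P w :: "nat \<Rightarrow> real"
    and Hc :: "nat \<Rightarrow> nat set"
    and xh :: "nat \<Rightarrow> nat \<Rightarrow> real"
    and \<alpha> M1 M2 :: "(nat \<times> nat) set"
  assumes P_nonneg: "\<And>f. f \<in> {1..F} \<Longrightarrow> P f \<ge> 0"
    and w_nonneg: "\<And>u. u \<in> {1..U} \<Longrightarrow> w u \<ge> 0"
    and Hc_sub: "\<And>u. u \<in> {1..U} \<Longrightarrow> Hc u \<subseteq> {0..H}"
    and Hc_0: "\<And>u. u \<in> {1..U} \<Longrightarrow> 0 \<in> Hc u"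
    and xh_range: "\<And>f h. f \<in> {1..F} \<Longrightarrow> h \<in> {1..H} \<Longrightarrow> xh f h \<in> {0..1}"
    and alpha: "alt_cycle_or_path F H \<alpha> M1 M2"
  shows "convex_on {- eps1 xh M1 M2 .. eps2 xh M1 M2}
           (\<lambda>\<epsilon>. g_obj F U P w Hc (X_eps xh M1 M2 \<epsilon>))"
proof -
  have "convex_on UNIV (\<lambda>e. P f * w u * (1 - (\<Prod>h\<in>Hc u - {0}. 1 - X_eps xh M1 M2 e f h)))"
    if f: "f \<in> {1..F}" and u: "u \<in> {1..U}" for f u
  proof (rule convex_on_cmul)
    show "0 \<le> P f * w u" using P_nonneg[OF f] w_nonneg[OF u] by simp
    have helpers: "Hc u - {0} \<subseteq> {1..H}" using Hc_sub[OF u] by auto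
    then have "finite (Hc u - {0})" by (rule finite_subset) simp
    then show "convex_on UNIV (\<lambda>e. 1 - (\<Prod>h\<in>Hc u - {0}. 1 - X_eps xh M1 M2 e f h))"
      using alt_cycle_or_path_file_unique[OF alpha] xh_range[OF f] helpers
      by (intro convex_on_one_minus_prod_X_eps) auto
  qed
  then have "convex_on UNIV (\<lambda>e. g_obj F U P w Hc (X_eps xh M1 M2 e))"
    unfolding g_obj_def by (intro convex_on_sum_functions) auto
  then show ?thesis by (rule convex_on_subset) simp_all
qed

end
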